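(* Let $F$ be a finite simple graph without isolated vertices, and let $G$ be a $k$-fold cover of $F$. Then $\gamma_t(G) \leq k\,\gamma_t(F)$. Moreover, this bound is tight: for every positive integer $k$ there exist a graph $F$ without isolated vertices and a $k$-fold cover $G$ of $F$ with $\gamma_t(G) = k\,\gamma_t(F)$.
   Context: All graphs are finite, simple and undirected. A graph $G$ is a cover of a graph $F$ if there is an onto map $\pi: V(G)\to V(F)$ such that for every vertex $v$ of $G$, $\pi$ maps the neighbours of $v$ in $G$ bijectively onto the neighbours of $\pi(v)$ in $F$; the cover is $k$-fold if every fibre $\pi^{-1}(u)$ has exactly $k$ vertices. A total dominating set of a graph is a set $S$ of vertices such that every vertex of the graph (including those in $S$) is adjacent to some vertex of $S$; it exists iff the graph has no isolated vertices. $\gamma_t(\cdot)$ denotes the total domination number, the minimum size of a total dominating set. *)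

theory Defs
  imports Main
begin

definition simple_graph :: "'a set \<Rightarrow> ('a \<Rightarrow> 'a \<Rightarrow> bool) \<Rightarrow> bool" where
  "simple_graph V E \<longleftrightarrow> finite V \<and> (\<forall>u v. E u v \<longrightarrow> u \<in> V \<and> v \<in> V)
     \<and> (\<forall>u v. E u v \<longrightarrow> E v u) \<and> (\<forall>v. \<not> E v v)"

definition nbrs :: "'a set \<Rightarrow> ('a \<Rightarrow> 'a \<Rightarrow> bool) \<Rightarrow> 'a \<Rightarrow> 'a set" where
  "nbrs V E v = {u \<in> V. E v u}"

definition no_isolated :: "'a set \<Rightarrow> ('a \<Rightarrow> 'a \<Rightarrow> bool) \<Rightarrow> bool" where
  "no_isolated V E \<longleftrightarrow> (\<forall>v \<in> V. \<exists>u \<in> V. E v u)"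

definition is_cover :: "'b set \<Rightarrow> ('b \<Rightarrow> 'b \<Rightarrow> bool) \<Rightarrow> 'a set \<Rightarrow> ('a \<Rightarrow> 'a \<Rightarrow> bool)
    \<Rightarrow> ('b \<Rightarrow> 'a) \<Rightarrow> bool" where
  "is_cover VG EG VF EF p \<longleftrightarrow> p ` VG = VF \<and>
     (\<forall>v \<in> VG. bij_betw p (nbrs VG EG v) (nbrs VF EF (p v)))"

definition k_fold_cover :: "nat \<Rightarrow> 'b set \<Rightarrow> ('b \<Rightarrow> 'b \<Rightarrow> bool) \<Rightarrow> 'a set
    \<Rightarrow> ('a \<Rightarrow> 'a \<Rightarrow> bool) \<Rightarrow> ('b \<Rightarrow> 'a) \<Rightarrow> bool" where
  "k_fold_cover k VG EG VF EF p \<longleftrightarrow> is_cover VG EG VF EF p \<and>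
     (\<forall>u \<in> VF. card {v \<in> VG. p v = u} = k)"

definition total_dominating_set :: "'a set \<Rightarrow> ('a \<Rightarrow> 'a \<Rightarrow> bool) \<Rightarrow> 'a set \<Rightarrow> bool" where
  "total_dominating_set V E S \<longleftrightarrow> S \<subseteq> V \<and> (\<forall>v \<in> V. \<exists>u \<in> S. E v u)"

definition gamma_t :: "'a set \<Rightarrow> ('a \<Rightarrow> 'a \<Rightarrow> bool) \<Rightarrow> nat" where
  "gamma_t V E = (LEAST n. \<exists>S. total_dominating_set V E S \<and> card S = n)"

end

theory Submission
  imports Defs
begin

text \<open>Since a cover maps the neighbourhood of every vertex onto the neighbourhood of its image,
  the preimage of a total dominating set of \<open>F\<close> is a total dominating set of \<open>G\<close>, and in a
  \<open>k\<close>-fold cover it has exactly \<open>k\<close> times as many vertices. The bound is attained by \<open>k\<close>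
  disjoint edges covering a single edge: in a graph in which every vertex has exactly one
  neighbour, each vertex is the only neighbour of its mate, so the only total dominating set
  is the whole vertex set.\<close>

lemma gamma_t_le_card: "total_dominating_set V E S \<Longrightarrow> gamma_t V E \<le> card S"
  unfolding gamma_t_def by (rule Least_le) blast

lemma obtain_min_total_dominating_set:
  assumes "total_dominating_set V E T"
  obtains S where "total_dominating_set V E S" "card S = gamma_t V E"
proof -
  have "\<exists>S. total_dominating_set V E S \<and> card S = gamma_t V E"
    unfolding gamma_t_def by (rule LeastI_ex) (use assms in blast)
  then show ?thesis using that by blast
qed

lemma total_dominating_set_self: "no_isolated V E \<Longrightarrow> total_dominating_set V E V"
  unfolding total_dominating_set_def no_isolated_def by blast

lemma total_dominating_set_cover_preimage:
  assumes cover: "is_cover VG EG VF EF p" and S: "total_dominating_set VF EF S"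
  shows "total_dominating_set VG EG {v \<in> VG. p v \<in> S}"
  unfolding total_dominating_set_def
proof (intro conjI ballI)
  show "{v \<in> VG. p v \<in> S} \<subseteq> VG" by blast
  fix v assume v: "v \<in> VG"
  then have "p v \<in> VF" using cover unfolding is_cover_def by blast
  then obtain u where u: "u \<in> S" "EF (p v) u" using S unfolding total_dominating_set_def by blast
  then have "u \<in> nbrs VF EF (p v)" using S unfolding total_dominating_set_def nbrs_def by blast
  moreover have "bij_betw p (nbrs VG EG v) (nbrs VF EF (p v))"
    using cover v unfolding is_cover_def by blast
  ultimately obtain w where "w \<in> nbrs VG EG v" "p w = u" by (metis bij_betw_imp_surj_on imageE)
  then show "\<exists>w \<in> {v \<in> VG. p v \<in> S}. EG v w" using u unfolding nbrs_def by blast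
qed

lemma card_k_fold_cover_preimage:
  assumes cover: "k_fold_cover k VG EG VF EF p" and "finite VG" and "S \<subseteq> VF"
  shows "card {v \<in> VG. p v \<in> S} = k * card S"
proof -
  have "finite S"
    using cover \<open>finite VG\<close> \<open>S \<subseteq> VF\<close> unfolding k_fold_cover_def is_cover_def
    by (metis finite_imageI finite_subset)
  have "{v \<in> VG. p v \<in> S} = (\<Union>u\<in>S. {v \<in> VG. p v = u})" by blast
  also have "card \<dots> = (\<Sum>u\<in>S. card {v \<in> VG. p v = u})"
    using \<open>finite S\<close> \<open>finite VG\<close> by (intro card_UN_disjoint) auto
  also have "\<dots> = (\<Sum>u\<in>S. k)"
    using cover \<open>S \<subseteq> VF\<close> unfolding k_fold_cover_def by (intro sum.cong) auto
  finally show ?thesis by simp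
qed

lemma gamma_t_k_fold_cover_le:
  assumes "no_isolated VF EF" "finite VG" "k_fold_cover k VG EG VF EF p"
  shows "gamma_t VG EG \<le> k * gamma_t VF EF"
proof -
  obtain S where S: "total_dominating_set VF EF S" "card S = gamma_t VF EF"
    using obtain_min_total_dominating_set[OF total_dominating_set_self[OF assms(1)]] by blast
  have "S \<subseteq> VF" using S(1) unfolding total_dominating_set_def by blast
  have "total_dominating_set VG EG {v \<in> VG. p v \<in> S}"
    using assms(3) unfolding k_fold_cover_def by (blast intro: total_dominating_set_cover_preimage S(1))
  then have "gamma_t VG EG \<le> card {v \<in> VG. p v \<in> S}" by (rule gamma_t_le_card)
  also have "\<dots> = k * gamma_t VF EF"
    using card_k_fold_cover_preimage[OF assms(3,2) \<open>S \<subseteq> VF\<close>] S(2) by simp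
  finally show ?thesis .
qed

lemma mem_total_dominating_set_if_unique_nbr:
  assumes "total_dominating_set V E S" "w \<in> V" "nbrs V E w = {v}"
  shows "v \<in> S"
proof -
  obtain u where "u \<in> S" "E w u" using assms(1,2) unfolding total_dominating_set_def by blast
  then have "u \<in> nbrs V E w" using assms(1) unfolding total_dominating_set_def nbrs_def by blast
  then show ?thesis using \<open>u \<in> S\<close> assms(3) by simp
qed

lemma gamma_t_one_regular:
  assumes "simple_graph V E" and one_nbr: "\<forall>v \<in> V. \<exists>w. nbrs V E v = {w}"
  shows "gamma_t V E = card V"
proof -
  have nbr: "w \<in> V \<and> E v w" if "nbrs V E v = {w}" for v w
  proof -
    have "w \<in> nbrs V E v" using that by simp
    then show ?thesis unfolding nbrs_def by simp
  qed
  have "S = V" if S: "total_dominating_set V E S" for S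
  proof
    show "S \<subseteq> V" using S unfolding total_dominating_set_def by blast
    show "V \<subseteq> S"
    proof
      fix v assume "v \<in> V"
      then obtain w where "nbrs V E v = {w}" using one_nbr by blast
      then have "w \<in> V" "E w v"
        using nbr \<open>simple_graph V E\<close> unfolding simple_graph_def by auto
      then have "v \<in> nbrs V E w" using \<open>v \<in> V\<close> unfolding nbrs_def by blast
      moreover obtain x where "nbrs V E w = {x}" using one_nbr \<open>w \<in> V\<close> by blast
      ultimately have "nbrs V E w = {v}" by simp
      then show "v \<in> S" by (rule mem_total_dominating_set_if_unique_nbr[OF S \<open>w \<in> V\<close>])
    qed
  qed
  moreover have "total_dominating_set V E V"
    unfolding total_dominating_set_def
  proof (intro conjI ballI subset_refl)
    fix v assume "v \<in> V"
    then obtain w where "nbrs V E v = {w}" using one_nbr by blast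
    then show "\<exists>u \<in> V. E v u" using nbr by blast
  qed
  ultimately show ?thesis
    unfolding gamma_t_def by (intro Least_equality) auto
qed

definition matching_graph :: "nat \<Rightarrow> nat \<Rightarrow> nat \<Rightarrow> bool" where
  "matching_graph k u v \<longleftrightarrow> u < 2 * k \<and> v < 2 * k \<and> (v = u + k \<or> u = v + k)"

lemma simple_graph_matching_graph: "simple_graph {..<2 * k} (matching_graph k)"
  unfolding simple_graph_def matching_graph_def by auto

lemma nbrs_matching_graph:
  "v < 2 * k \<Longrightarrow> nbrs {..<2 * k} (matching_graph k) v = {if v < k then v + k else v - k}"
  unfolding nbrs_def matching_graph_def by auto

lemma k_fold_cover_matching_graph:
  assumes "k > 0"
  shows "k_fold_cover k {..<2 * k} (matching_graph k) {..<2} (matching_graph 1)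
    (\<lambda>v. if v < k then 0 else 1)"
  unfolding k_fold_cover_def is_cover_def
proof (intro conjI ballI)
  show "(\<lambda>v. if v < k then 0 else 1) ` {..<2 * k} = {..<2::nat}"
  proof
    have "0 \<in> (\<lambda>v. if v < k then 0 else 1) ` {..<2 * k}"
      by (rule image_eqI[of _ _ 0]) (use assms in auto)
    moreover have "1 \<in> (\<lambda>v. if v < k then 0 else 1) ` {..<2 * k}"
      by (rule image_eqI[of _ _ k]) (use assms in auto)
    moreover have "{..<2::nat} = {0, 1}" by auto
    ultimately show "{..<2::nat} \<subseteq> (\<lambda>v. if v < k then 0 else 1) ` {..<2 * k}"
      by (metis empty_subsetI insert_subset)
  qed auto
next
  fix v assume "v \<in> {..<2 * k}"
  then show "bij_betw (\<lambda>v. if v < k then 0 else 1) (nbrs {..<2 * k} (matching_graph k) v)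
      (nbrs {..<2} (matching_graph 1) (if v < k then 0 else 1))"
    using nbrs_matching_graph[of v k] nbrs_matching_graph[of _ 1] by (simp add: bij_betw_def)
next
  fix r :: nat assume "r \<in> {..<2}"
  then have "{v \<in> {..<2 * k}. (if v < k then 0 else 1) = r}
      = (if r = 0 then {..<k} else {k..<2 * k})"
    by auto
  then show "card {v \<in> {..<2 * k}. (if v < k then 0 else 1) = r} = k" by simp
qed

lemma gamma_t_matching_graph: "gamma_t {..<2 * k} (matching_graph k) = 2 * k"
  using gamma_t_one_regular[OF simple_graph_matching_graph] nbrs_matching_graph by simp

theorem theorem2p9:
  fixes VF :: "'a set" and EF :: "'a \<Rightarrow> 'a \<Rightarrow> bool"
    and VG :: "'b set" and EG :: "'b \<Rightarrow> 'b \<Rightarrow> bool"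
    and p :: "'b \<Rightarrow> 'a" and k :: nat
  shows "(simple_graph VF EF \<and> no_isolated VF EF \<and> simple_graph VG EG
            \<and> k_fold_cover k VG EG VF EF p
          \<longrightarrow> gamma_t VG EG \<le> k * gamma_t VF EF)
       \<and> (\<forall>k::nat. k > 0 \<longrightarrow>
            (\<exists>(VF' :: nat set) EF' (VG' :: nat set) EG' p'.
               VF' \<noteq> {} \<and> simple_graph VF' EF' \<and> no_isolated VF' EF'
               \<and> simple_graph VG' EG' \<and> k_fold_cover k VG' EG' VF' EF' p'
               \<and> gamma_t VG' EG' = k * gamma_t VF' EF'))"
proof (intro conjI allI impI)
  show "gamma_t VG EG \<le> k * gamma_t VF EF"
    if "simple_graph VF EF \<and> no_isolated VF EF \<and> simple_graph VG EG
        \<and> k_fold_cover k VG EG VF EF p"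
    using that gamma_t_k_fold_cover_le unfolding simple_graph_def by blast
next
  fix k :: nat assume "k > 0"
  have "simple_graph {..<2} (matching_graph 1)"
    using simple_graph_matching_graph[of 1] by simp
  moreover have "no_isolated {..<2} (matching_graph 1)"
    unfolding no_isolated_def matching_graph_def by (auto simp: lessThan_nat_numeral)
  moreover have "gamma_t {..<2 * k} (matching_graph k) = k * gamma_t {..<2} (matching_graph 1)"
    using gamma_t_matching_graph[of k] gamma_t_matching_graph[of 1] by simp
  moreover have "{..<2::nat} \<noteq> {}" by (simp add: lessThan_empty_iff)
  ultimately show "\<exists>(VF' :: nat set) EF' (VG' :: nat set) EG' p'.
      VF' \<noteq> {} \<and> simple_graph VF' EF' \<and> no_isolated VF' EF'
      \<and> simple_graph VG' EG' \<and> k_fold_cover k VG' EG' VF' EF' p'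
      \<and> gamma_t VG' EG' = k * gamma_t VF' EF'"
    using simple_graph_matching_graph k_fold_cover_matching_graph[OF \<open>k > 0\<close>] by blast
qed

end
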